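(* For any mm-space $X$, \[ \square(X,* )\ge 1-\sup_{x\in X}\mu_X(U_1(x)), \] where $U_1(x)=\{y\in X: d_X(x,y)<1\}$ and $*$ is the one-point mm-space.
   Context: An mm-space is a triple $(X,d_X,\mu_X)$ where $(X,d_X)$ is a complete separable metric space and $\mu_X$ is a Borel probability measure on $X$. A parameter of $X$ is a Borel map $\varphi\colon [0,1)\to X$ with $\varphi_*\mathcal{L}^1=\mu_X$. The box distance $\square(X,Y)$ is the infimum of $\varepsilon\ge 0$ such that there exist parameters $\varphi$ of $X$, $\psi$ of $Y$ and a Borel set $I_0\subset[0,1)$ with $\mathcal{L}^1(I_0)\ge 1-\varepsilon$ and $|d_X(\varphi(s),\varphi(t))-d_Y(\psi(s),\psi(t))|\le\varepsilon$ for all $s,t\in I_0$. The one-point mm-space $*$ has one point with the Dirac measure. *)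

theory Defs
  imports "HOL-Probability.Probability"
begin

text \<open>An mm-space is represented by a Polish metric type (complete, separable, metric
  given by dist) together with a Borel probability measure. For the generic box distance
  we take the metric as an explicit function argument.\<close>

definition mm_space :: "'a::polish_space measure \<Rightarrow> bool" where
  "mm_space \<mu> \<longleftrightarrow> sets \<mu> = sets borel \<and> prob_space \<mu>"

definition mm_parameter :: "'a measure \<Rightarrow> (real \<Rightarrow> 'a) \<Rightarrow> bool" where
  "mm_parameter \<mu> \<phi> \<longleftrightarrow>
     \<phi> \<in> measurable (restrict_space lborel {0..<1}) \<mu> \<and>
     distr (restrict_space lborel {0..<1}) \<mu> \<phi> = \<mu>"

definition box_dist ::
  "('a \<Rightarrow> 'a \<Rightarrow> real) \<Rightarrow> 'a measure \<Rightarrow> ('b \<Rightarrow> 'b \<Rightarrow> real) \<Rightarrow> 'b measure \<Rightarrow> real" where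
  "box_dist dX \<mu>X dY \<mu>Y = Inf {\<epsilon>. \<epsilon> \<ge> 0 \<and>
     (\<exists>\<phi> \<psi> I0. mm_parameter \<mu>X \<phi> \<and> mm_parameter \<mu>Y \<psi> \<and>
        I0 \<in> sets borel \<and> I0 \<subseteq> {0..<1} \<and> measure lborel I0 \<ge> 1 - \<epsilon> \<and>
        (\<forall>s\<in>I0. \<forall>t\<in>I0. \<bar>dX (\<phi> s) (\<phi> t) - dY (\<psi> s) (\<psi> t)\<bar> \<le> \<epsilon>))}"

definition one_point_dist :: "unit \<Rightarrow> unit \<Rightarrow> real" where
  "one_point_dist x y = 0"

definition one_point_measure :: "unit measure" where
  "one_point_measure = return (count_space UNIV) ()"

end

(* If a parameter phi of X and a Borel set I in [0,1) of measure at least 1 - e make all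
   distances d(phi s, phi t), s, t in I, e-close to the zero distances of the one-point space,
   and e < 1, then phi maps I into the open unit ball around phi s0 for any s0 in I; hence
   1 - e <= |I| <= mu(U_1(phi s0)) <= sup_x mu(U_1(x)).
   The infimum defining the box distance must also be over a nonempty set, i.e. every Borel
   probability measure on a Polish space needs a parameter.  We code the space into the reals
   by a Borel map with a Borel left inverse and compose the decoding with the quantile
   function of the coded distribution. *)

theory Submission
  imports Defs
begin

(* Only the base-4 digits 0 and 1 occur, so every tail is at most 1/3 and each digit is
   recovered by a floor, with none of the ambiguity of binary expansions. *)
definition quaternary_code :: "(nat \<Rightarrow> bool) \<Rightarrow> real" where
  "quaternary_code b = (\<Sum>j. of_bool (b j) / 4 ^ Suc j)"

lemma summable_quaternary_code: "summable (\<lambda>j. of_bool (b j) / 4 ^ Suc j :: real)"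
  by (rule summable_comparison_test'[OF summable_divide[OF summable_geometric[of "1/4"], of 4]])
     (auto simp: power_one_over)

lemma quaternary_code_nonneg: "0 \<le> quaternary_code b"
  unfolding quaternary_code_def by (intro suminf_nonneg summable_quaternary_code) simp

lemma quaternary_code_less_1: "quaternary_code b < 1"
proof -
  have "quaternary_code b \<le> (\<Sum>j. (1/4::real) ^ j / 4)"
    unfolding quaternary_code_def
    by (intro suminf_le summable_quaternary_code summable_divide summable_geometric)
       (auto simp: power_one_over)
  also have "\<dots> = 1/3"
    by (simp add: suminf_divide[OF summable_geometric] suminf_geometric)
  finally show ?thesis by simp
qed

lemma quaternary_code_Suc:
  "4 * quaternary_code b = of_bool (b 0) + quaternary_code (\<lambda>n. b (Suc n))"
proof -
  have "quaternary_code (\<lambda>n. b (Suc n)) = 4 * (\<Sum>j. of_bool (b (Suc j)) / 4 ^ Suc (Suc j))"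
    unfolding quaternary_code_def
    using suminf_mult[OF summable_quaternary_code[of "\<lambda>n. b (Suc n)"], of "1/4"]
    by simp
  also have "(\<Sum>j. of_bool (b (Suc j)) / 4 ^ Suc (Suc j)) = quaternary_code b - of_bool (b 0) / 4"
    unfolding quaternary_code_def using suminf_split_head[OF summable_quaternary_code[of b]]
    by simp
  finally show ?thesis by simp
qed

lemma floor_quaternary_code_mod_4:
  "\<lfloor>4 ^ Suc m * quaternary_code b\<rfloor> mod 4 = of_bool (b m)"
proof (induction m arbitrary: b)
  case 0
  have "\<lfloor>of_bool (b 0) + quaternary_code (\<lambda>n. b (Suc n))\<rfloor> = of_bool (b 0)"
    using quaternary_code_nonneg quaternary_code_less_1 by (simp add: floor_eq_iff)
  then show ?case by (simp add: quaternary_code_Suc)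
next
  case (Suc m)
  have "4 ^ Suc (Suc m) * quaternary_code b = 4 ^ Suc m * (4 * quaternary_code b)"
    by simp
  also have "\<dots> = of_int (4 * (4 ^ m * of_bool (b 0))) + 4 ^ Suc m * quaternary_code (\<lambda>n. b (Suc n))"
    by (simp add: quaternary_code_Suc distrib_left)
  finally have "\<lfloor>4 ^ Suc (Suc m) * quaternary_code b\<rfloor>
      = 4 * (4 ^ m * of_bool (b 0)) + \<lfloor>4 ^ Suc m * quaternary_code (\<lambda>n. b (Suc n))\<rfloor>"
    by (simp only: int_add_floor)
  then show ?case using Suc.IH[of "\<lambda>n. b (Suc n)"] by simp
qed

definition quaternary_bit :: "nat \<Rightarrow> real \<Rightarrow> bool" where
  "quaternary_bit j y \<longleftrightarrow> \<lfloor>4 ^ Suc j * y\<rfloor> mod 4 = 1"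

lemma quaternary_bit_quaternary_code: "quaternary_bit j (quaternary_code b) \<longleftrightarrow> b j"
  using floor_quaternary_code_mod_4[of j b] unfolding quaternary_bit_def by auto

lemma measurable_quaternary_bit[measurable]:
  "quaternary_bit j \<in> measurable borel (count_space UNIV)"
  unfolding quaternary_bit_def by measurable

definition ball_bits :: "(nat \<Rightarrow> 'a::metric_space) \<Rightarrow> 'a \<Rightarrow> nat \<Rightarrow> bool" where
  "ball_bits d x j \<longleftrightarrow> dist x (d (snd (prod_decode j))) < (1/2) ^ fst (prod_decode j)"

definition ball_code :: "(nat \<Rightarrow> 'a::metric_space) \<Rightarrow> 'a \<Rightarrow> real" where
  "ball_code d x = quaternary_code (ball_bits d x)"

definition center_index :: "nat \<Rightarrow> real \<Rightarrow> nat" where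
  "center_index k y = (LEAST n. quaternary_bit (prod_encode (k, n)) y)"

definition center :: "(nat \<Rightarrow> 'a) \<Rightarrow> nat \<Rightarrow> real \<Rightarrow> 'a" where
  "center d k y = d (center_index k y)"

(* Off the codes whose centers converge geometrically the decoder is constant, so that it is
   a pointwise limit of measurable maps everywhere. *)
definition coherent_codes :: "(nat \<Rightarrow> 'a::metric_space) \<Rightarrow> real set" where
  "coherent_codes d = {y. \<forall>k m. k \<le> m \<longrightarrow> dist (center d k y) (center d m y) \<le> 2 * (1/2) ^ k}"

definition decode_approx :: "(nat \<Rightarrow> 'a::metric_space) \<Rightarrow> nat \<Rightarrow> real \<Rightarrow> 'a" where
  "decode_approx d k y = (if y \<in> coherent_codes d then center d k y else d 0)"

definition ball_decode :: "(nat \<Rightarrow> 'a::metric_space) \<Rightarrow> real \<Rightarrow> 'a" where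
  "ball_decode d y = lim (\<lambda>k. decode_approx d k y)"

lemma center_index_ball_code:
  "center_index k (ball_code d x) = (LEAST n. dist x (d n) < (1/2) ^ k)"
  unfolding center_index_def ball_code_def quaternary_bit_quaternary_code ball_bits_def by simp

context
  fixes d :: "nat \<Rightarrow> 'a::metric_space"
  assumes dense: "\<And>x e. e > 0 \<Longrightarrow> \<exists>n. dist x (d n) < e"
begin

lemma dist_center_ball_code: "dist x (center d k (ball_code d x)) < (1/2) ^ k"
proof -
  have "\<exists>n. dist x (d n) < (1/2) ^ k" by (rule dense) simp
  from LeastI_ex[OF this] show ?thesis unfolding center_def center_index_ball_code .
qed

lemma ball_code_coherent: "ball_code d x \<in> coherent_codes d"
proof -
  have "dist (center d k (ball_code d x)) (center d m (ball_code d x)) \<le> 2 * (1/2) ^ k"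
    if "k \<le> m" for k m
  proof -
    have "(1/2::real) ^ m \<le> (1/2) ^ k" using that by (intro power_decreasing) auto
    then show ?thesis
      using dist_triangle3[of "center d k (ball_code d x)" "center d m (ball_code d x)" x]
        dist_center_ball_code[of x k] dist_center_ball_code[of x m] by linarith
  qed
  then show ?thesis unfolding coherent_codes_def by blast
qed

lemma ball_decode_ball_code: "ball_decode d (ball_code d x) = x"
proof -
  have "(\<lambda>k. dist (center d k (ball_code d x)) x) \<longlonglongrightarrow> 0"
  proof (rule real_tendsto_sandwich[of "\<lambda>_. 0" _ _ "\<lambda>k. (1/2) ^ k"])
    show "\<forall>\<^sub>F k in sequentially. dist (center d k (ball_code d x)) x \<le> (1/2) ^ k"
      by (intro always_eventually allI) (metis dist_center_ball_code dist_commute less_imp_le)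
    show "(\<lambda>k. (1/2::real) ^ k) \<longlonglongrightarrow> 0"
      by (rule LIMSEQ_power_zero) simp
  qed simp_all
  then have "(\<lambda>k. center d k (ball_code d x)) \<longlonglongrightarrow> x"
    by (rule iffD2[OF tendsto_dist_iff])
  then have "(\<lambda>k. decode_approx d k (ball_code d x)) \<longlonglongrightarrow> x"
    unfolding decode_approx_def using ball_code_coherent by simp
  then show ?thesis unfolding ball_decode_def by (rule limI)
qed

end

lemma Cauchy_if_dist_le_half_power:
  fixes f :: "nat \<Rightarrow> 'a::metric_space"
  assumes "\<And>k m. k \<le> m \<Longrightarrow> dist (f k) (f m) \<le> 2 * (1/2) ^ k"
  shows "Cauchy f"
proof (rule metric_CauchyI)
  fix e :: real
  assume "e > 0"
  then obtain M where M: "(1/2::real) ^ M < e / 2"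
    using real_arch_pow_inv[of "e/2" "1/2"] by auto
  have "dist (f m) (f n) < e" if "M \<le> m" "M \<le> n" for m n
  proof -
    have "dist (f m) (f n) \<le> 2 * (1/2) ^ min m n"
      using assms[of m n] assms[of n m] by (cases "m \<le> n") (auto simp: dist_commute min_def)
    moreover have "(1/2::real) ^ min m n \<le> (1/2) ^ M"
      using that by (simp add: power_decreasing)
    ultimately show ?thesis using M by linarith
  qed
  then show "\<exists>M. \<forall>m\<ge>M. \<forall>n\<ge>M. dist (f m) (f n) < e" by blast
qed

lemma decode_approx_tendsto:
  fixes d :: "nat \<Rightarrow> 'a::{metric_space,complete_space}"
  shows "(\<lambda>k. decode_approx d k y) \<longlonglongrightarrow> ball_decode d y"
proof -
  have "Cauchy (\<lambda>k. decode_approx d k y)"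
  proof (cases "y \<in> coherent_codes d")
    case True
    then show ?thesis unfolding decode_approx_def
      by (intro Cauchy_if_dist_le_half_power) (simp add: coherent_codes_def)
  next
    case False
    then show ?thesis unfolding decode_approx_def by (simp add: convergent_Cauchy convergent_const)
  qed
  then show ?thesis
    unfolding ball_decode_def by (simp add: Cauchy_convergent_iff convergent_LIMSEQ_iff)
qed

lemma measurable_center_index[measurable]:
  "center_index k \<in> measurable borel (count_space UNIV)"
  unfolding center_index_def by measurable

lemma measurable_center[measurable]: "center d k \<in> borel_measurable borel"
  unfolding center_def by (rule measurable_compose[OF measurable_center_index]) simp

lemma measurable_ball_decode:
  fixes d :: "nat \<Rightarrow> 'a::polish_space"
  shows "ball_decode d \<in> borel_measurable borel"
proof (rule borel_measurable_LIMSEQ_metric[OF _ decode_approx_tendsto])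
  show "decode_approx d k \<in> borel_measurable borel" for k
    unfolding decode_approx_def coherent_codes_def by measurable
qed

lemma measurable_ball_code:
  fixes d :: "nat \<Rightarrow> 'a::{metric_space,second_countable_topology}"
  shows "ball_code d \<in> borel_measurable borel"
proof -
  define partial where "partial i x = (\<Sum>j<i. of_bool (ball_bits d x j) / 4 ^ Suc j :: real)" for i x
  have "partial i \<in> borel_measurable borel" for i
    unfolding partial_def ball_bits_def by measurable
  moreover have "(\<lambda>i. partial i x) \<longlonglongrightarrow> ball_code d x" for x
    unfolding partial_def ball_code_def quaternary_code_def
    by (rule summable_LIMSEQ[OF summable_quaternary_code])
  ultimately show ?thesis by (rule borel_measurable_LIMSEQ_metric)
qed

lemma distr_restrict_lborel_Ico_eq_Ioo:
  assumes "f \<in> restrict_space lborel {0..<1::real} \<rightarrow>\<^sub>M N"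
    and "f \<in> restrict_space lborel {0<..<1::real} \<rightarrow>\<^sub>M N"
  shows "distr (restrict_space lborel {0..<1}) N f = distr (restrict_space lborel {0<..<1}) N f"
proof (rule measure_eqI)
  fix A
  assume "A \<in> sets (distr (restrict_space lborel {0..<1}) N f)"
  then have A: "A \<in> sets N" by simp
  have Ico: "f -` A \<inter> {0..<1} \<in> sets lborel" and Ioo: "f -` A \<inter> {0<..<1} \<in> sets lborel"
    using measurable_sets[OF assms(1) A] measurable_sets[OF assms(2) A]
    by (simp_all add: space_restrict_space sets_restrict_space_iff)
  have "emeasure lborel (f -` A \<inter> {0..<1}) = emeasure lborel (f -` A \<inter> {0<..<1})"
    by (rule emeasure_eq_AE[OF _ Ico Ioo])
       (use AE_lborel_singleton[of "0::real"] in \<open>auto elim!: AE_mp\<close>)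
  then show "emeasure (distr (restrict_space lborel {0..<1}) N f) A
      = emeasure (distr (restrict_space lborel {0<..<1}) N f) A"
    using assms A by (simp add: emeasure_distr space_restrict_space emeasure_restrict_space)
qed simp

lemma mm_parameter_if_real_code:
  fixes c :: "'a \<Rightarrow> real"
  assumes "prob_space \<mu>"
    and code: "c \<in> \<mu> \<rightarrow>\<^sub>M borel" and decode: "r \<in> borel \<rightarrow>\<^sub>M \<mu>"
    and r_c: "\<And>x. x \<in> space \<mu> \<Longrightarrow> r (c x) = x"
  shows "\<exists>\<phi>. mm_parameter \<mu> \<phi>"
proof -
  define \<nu> where "\<nu> = distr \<mu> borel c"
  have "real_distribution \<nu>"
    unfolding real_distribution_def real_distribution_axioms_def \<nu>_def
    using prob_space.prob_space_distr[OF assms(1) code] by simp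
  then interpret cdf_distribution \<nu> by (simp add: cdf_distribution_def)
  \<comment> \<open>\<open>I\<close> is the quantile function of \<open>\<nu>\<close>; the value at the null point 0 is irrelevant\<close>
  define \<phi> where "\<phi> t = r (I (if t \<in> {0<..<1} then t else 1/2))" for t
  have "\<phi> \<in> borel \<rightarrow>\<^sub>M \<mu>"
  proof -
    have "(\<lambda>t::real. if t \<in> {0<..<1} then t else 1/2) \<in> borel \<rightarrow>\<^sub>M restrict_space borel {0<..<1}"
      by (rule measurable_restrict_space2) auto
    then show ?thesis
      unfolding \<phi>_def using measurable_CI decode by measurable
  qed
  then have \<phi>_meas: "\<phi> \<in> restrict_space lborel S \<rightarrow>\<^sub>M \<mu>" for S
    by (simp add: measurable_restrict_space1 cong: measurable_cong_sets)
  have I_meas: "I \<in> restrict_space lborel {0<..<1} \<rightarrow>\<^sub>M borel"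
    using measurable_CI by (simp cong: measurable_cong_sets)
  have "distr (restrict_space lborel {0..<1}) \<mu> \<phi> = distr (restrict_space lborel {0<..<1}) \<mu> \<phi>"
    by (rule distr_restrict_lborel_Ico_eq_Ioo[OF \<phi>_meas \<phi>_meas])
  also have "\<dots> = distr (restrict_space lborel {0<..<1}) \<mu> (r \<circ> I)"
    by (rule distr_cong) (auto simp: \<phi>_def space_restrict_space)
  also have "\<dots> = distr \<nu> \<mu> r"
    by (simp add: distr_distr[OF decode I_meas, symmetric] distr_I_eq_M)
  also have "\<dots> = distr \<mu> \<mu> (r \<circ> c)"
    unfolding \<nu>_def by (rule distr_distr[OF decode code])
  also have "\<dots> = \<mu>"
    by (simp add: distr_cong[of \<mu> \<mu> \<mu> \<mu> "r \<circ> c" "\<lambda>x. x"] r_c)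
  finally show ?thesis unfolding mm_parameter_def using \<phi>_meas by blast
qed

lemma dense_sequence_exists:
  "\<exists>d :: nat \<Rightarrow> 'a::{metric_space,second_countable_topology}.
     \<forall>x e. 0 < e \<longrightarrow> (\<exists>n. dist x (d n) < e)"
proof -
  obtain D :: "'a set" where D: "countable D" "\<And>X. open X \<Longrightarrow> X \<noteq> {} \<Longrightarrow> \<exists>d\<in>D. d \<in> X"
    using countable_dense_exists by blast
  have "\<exists>n. dist x (from_nat_into D n) < e" if e: "0 < e" for x e
  proof -
    obtain y where "y \<in> D" "y \<in> ball x e" using D(2)[of "ball x e"] e by force
    then show ?thesis using from_nat_into_surj[OF D(1)] by (metis mem_ball)
  qed
  then show ?thesis by blast
qed

lemma mm_parameter_exists:
  fixes \<mu> :: "'a::polish_space measure"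
  assumes "mm_space \<mu>"
  shows "\<exists>\<phi>. mm_parameter \<mu> \<phi>"
proof -
  have sets_\<mu>: "sets \<mu> = sets borel" and "prob_space \<mu>"
    using assms unfolding mm_space_def by auto
  obtain d :: "nat \<Rightarrow> 'a" where dense: "\<And>x e. 0 < e \<Longrightarrow> \<exists>n. dist x (d n) < e"
    using dense_sequence_exists by blast
  show ?thesis
  proof (rule mm_parameter_if_real_code[OF \<open>prob_space \<mu>\<close>])
    show "ball_code d \<in> \<mu> \<rightarrow>\<^sub>M borel"
      using measurable_ball_code by (simp add: measurable_cong_sets[OF sets_\<mu> refl])
    show "ball_decode d \<in> borel \<rightarrow>\<^sub>M \<mu>"
      using measurable_ball_decode by (simp add: measurable_cong_sets[OF refl sets_\<mu>])
  qed (rule ball_decode_ball_code[OF dense])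
qed

lemma mm_parameter_one_point: "mm_parameter one_point_measure (\<lambda>_. ())"
proof -
  have meas: "(\<lambda>_. ()) \<in> restrict_space lborel {0..<1::real} \<rightarrow>\<^sub>M one_point_measure"
    unfolding one_point_measure_def by (simp add: measurable_cong_sets[OF refl sets_return])
  have "distr (restrict_space lborel {0..<1::real}) one_point_measure (\<lambda>_. ()) = one_point_measure"
  proof (rule measure_eqI)
    fix A
    assume "A \<in> sets (distr (restrict_space lborel {0..<1::real}) one_point_measure (\<lambda>_. ()))"
    have "A = {} \<or> A = UNIV" by (cases "() \<in> A") auto
    then show "emeasure (distr (restrict_space lborel {0..<1::real}) one_point_measure (\<lambda>_. ())) A
        = emeasure one_point_measure A"
      using meas by (auto simp: emeasure_distr space_restrict_space emeasure_restrict_space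
          one_point_measure_def)
  qed simp
  then show ?thesis unfolding mm_parameter_def using meas by blast
qed

lemma measure_eq_measure_preimage_mm_parameter:
  assumes "mm_parameter \<mu> \<phi>" and "A \<in> sets \<mu>"
  shows "measure \<mu> A = measure lborel (\<phi> -` A \<inter> {0..<1})"
proof -
  have meas: "\<phi> \<in> restrict_space lborel {0..<1} \<rightarrow>\<^sub>M \<mu>"
    and distr: "distr (restrict_space lborel {0..<1}) \<mu> \<phi> = \<mu>"
    using assms(1) unfolding mm_parameter_def by auto
  have "measure \<mu> A = measure (distr (restrict_space lborel {0..<1}) \<mu> \<phi>) A"
    by (simp add: distr)
  also have "\<dots> = measure (restrict_space lborel {0..<1}) (\<phi> -` A \<inter> {0..<1})"
    using meas assms(2) by (simp add: measure_distr space_restrict_space)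
  also have "\<dots> = measure lborel (\<phi> -` A \<inter> {0..<1})"
    using measurable_sets[OF meas assms(2)]
    by (simp add: measure_restrict_space space_restrict_space sets_restrict_space_iff)
  finally show ?thesis .
qed

lemma measure_le_measure_ball_mm_parameter:
  assumes "mm_space \<mu>" "mm_parameter \<mu> \<phi>"
    and "I \<in> sets borel" "I \<subseteq> {0..<1}" "s \<in> I" "\<And>t. t \<in> I \<Longrightarrow> dist (\<phi> s) (\<phi> t) < r"
  shows "measure lborel I \<le> measure \<mu> (ball (\<phi> s) r)"
proof -
  have ball_sets: "ball (\<phi> s) r \<in> sets \<mu>"
    using assms(1) unfolding mm_space_def by simp
  let ?B = "\<phi> -` ball (\<phi> s) r \<inter> {0..<1}"
  have "?B \<in> sets lborel"
    using measurable_sets[OF _ ball_sets, of \<phi> "restrict_space lborel {0..<1}"] assms(2)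
    by (simp add: mm_parameter_def space_restrict_space sets_restrict_space_iff)
  then have "?B \<in> fmeasurable lborel"
    by (intro fmeasurableI2[of "{0..<1}" lborel ?B] fmeasurableI) auto
  moreover have "I \<subseteq> ?B"
    using assms(4,6) by auto
  ultimately have "measure lborel I \<le> measure lborel ?B"
    using assms(3) by (intro measure_mono_fmeasurable) auto
  also have "\<dots> = measure \<mu> (ball (\<phi> s) r)"
    by (rule measure_eq_measure_preimage_mm_parameter[OF assms(2) ball_sets, symmetric])
  finally show ?thesis .
qed

lemma le_box_dist:
  assumes "mm_parameter \<mu>X \<phi>\<^sub>0" "mm_parameter \<mu>Y \<psi>\<^sub>0"
    and "\<And>\<epsilon> \<phi> \<psi> I. \<lbrakk>0 \<le> \<epsilon>; mm_parameter \<mu>X \<phi>; mm_parameter \<mu>Y \<psi>;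
          I \<in> sets borel; I \<subseteq> {0..<1}; 1 - \<epsilon> \<le> measure lborel I;
          \<forall>s\<in>I. \<forall>t\<in>I. \<bar>dX (\<phi> s) (\<phi> t) - dY (\<psi> s) (\<psi> t)\<bar> \<le> \<epsilon>\<rbrakk> \<Longrightarrow> c \<le> \<epsilon>"
  shows "c \<le> box_dist dX \<mu>X dY \<mu>Y"
  unfolding box_dist_def
proof (rule cInf_greatest)
  show "{\<epsilon>. 0 \<le> \<epsilon> \<and> (\<exists>\<phi> \<psi> I. mm_parameter \<mu>X \<phi> \<and> mm_parameter \<mu>Y \<psi> \<and>
      I \<in> sets borel \<and> I \<subseteq> {0..<1} \<and> 1 - \<epsilon> \<le> measure lborel I \<and>
      (\<forall>s\<in>I. \<forall>t\<in>I. \<bar>dX (\<phi> s) (\<phi> t) - dY (\<psi> s) (\<psi> t)\<bar> \<le> \<epsilon>))} \<noteq> {}"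
    \<comment> \<open>otherwise the infimum would be junk; tolerance 1 is admissible with the empty set\<close>
    using assms(1,2) by (intro ex_in_conv[THEN iffD1] exI[of _ 1]) (auto intro!: exI[of _ "{}"])
qed (use assms(3) in blast)

lemma one_minus_SUP_measure_ball_le_tolerance:
  assumes "mm_space \<mu>" "mm_parameter \<mu> \<phi>" "I \<in> sets borel" "I \<subseteq> {0..<1}"
    and measure_I: "1 - \<epsilon> \<le> measure lborel I"
    and close: "\<And>s t. s \<in> I \<Longrightarrow> t \<in> I \<Longrightarrow> dist (\<phi> s) (\<phi> t) \<le> \<epsilon>"
  shows "1 - (SUP x. measure \<mu> (ball x 1)) \<le> \<epsilon>"
proof -
  have ball_le_SUP: "measure \<mu> (ball x 1) \<le> (SUP x. measure \<mu> (ball x 1))" for x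
    using assms(1) prob_space.prob_le_1[of \<mu>] unfolding mm_space_def
    by (intro cSUP_upper bdd_aboveI[of _ 1]) auto
  show ?thesis
  proof (cases "\<epsilon> < 1")
    case True
    then obtain s where s: "s \<in> I" using measure_I by fastforce
    have "dist (\<phi> s) (\<phi> t) < 1" if "t \<in> I" for t
      using close[OF s that] True by linarith
    then have "measure lborel I \<le> measure \<mu> (ball (\<phi> s) 1)"
      by (rule measure_le_measure_ball_mm_parameter[OF assms(1-4) s])
    then show ?thesis using measure_I ball_le_SUP[of "\<phi> s"] by linarith
  next
    case False
    then show ?thesis
      using ball_le_SUP[of undefined] measure_nonneg[of \<mu> "ball undefined 1"] by linarith
  qed
qed

theorem proposition4p1:
  fixes \<mu> :: "'a::polish_space measure"
  assumes "mm_space \<mu>"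
  shows "box_dist dist \<mu> one_point_dist one_point_measure
           \<ge> 1 - (SUP x. measure \<mu> {y. dist x y < 1})"
proof -
  obtain \<phi>\<^sub>0 where "mm_parameter \<mu> \<phi>\<^sub>0"
    using mm_parameter_exists[OF assms] by blast
  then have "1 - (SUP x. measure \<mu> (ball x 1)) \<le> box_dist dist \<mu> one_point_dist one_point_measure"
    by (rule le_box_dist[OF _ mm_parameter_one_point])
       (auto simp: one_point_dist_def intro!: one_minus_SUP_measure_ball_le_tolerance[OF assms])
  then show ?thesis by (simp add: ball_def)
qed

end
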